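(* Let $n\ge 3$ be odd and let $f=f_n$. If $x$ is an $n$-bit string of odd weight and $\overline{x}$ denotes its one's complement (the string obtained by flipping every bit of $x$), then $$f_n(\overline{x}) = f_n(x) + 2^{n-1}.$$
   Context: An $n$-bit string is $x=x_1x_2\cdots x_n$ with each $x_i\in\{0,1\}$; its (Hamming) weight is the number of $1$s. For distinct $n$-bit strings, $x<y$ in lexicographic order if there is $k$ with $x_j=y_j$ for all $j<k$ and $x_k<y_k$. Let $S_n^i$ be the sequence of all $n$-bit strings of weight $i$ listed in increasing lexicographic order, and $R_n^i$ the same strings listed in the reverse order (decreasing lexicographic order). Define the sequence $S_n$ as the concatenation $S_n=(R_n^1,R_n^3,R_n^5,\dots,R_n^{n-1},S_n^n,S_n^{n-2},\dots,S_n^4,S_n^2,S_n^0)$ if $n$ is even, and $S_n=(R_n^1,R_n^3,\dots,R_n^{n-2},R_n^n,S_n^{n-1},\dots,S_n^4,S_n^2,S_n^0)$ if $n$ is odd. Every $n$-bit string occurs exactly once in $S_n$; let $f_n$ be the bijection from $n$-bit strings to $\{1,\dots,2^n\}$ sending the string in position $j$ of $S_n$ to $j$. *)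

theory Defs
  imports Main "HOL-Library.List_Lexorder"
begin

text \<open>n-bit strings are lists of booleans of length n (True = 1, False = 0).
  The order on bool list from List_Lexorder is lexicographic with False < True;
  on strings of equal length it is exactly the lexicographic order of the paper.\<close>

definition weight :: "bool list \<Rightarrow> nat" where
  "weight x = count_list x True"

definition Slex :: "nat \<Rightarrow> nat \<Rightarrow> bool list list" where
  "Slex n i = sorted_list_of_set {x. length x = n \<and> weight x = i}"

definition Rlex :: "nat \<Rightarrow> nat \<Rightarrow> bool list list" where
  "Rlex n i = rev (Slex n i)"

definition Seq :: "nat \<Rightarrow> bool list list" where
  "Seq n = concat (map (Rlex n) (filter odd [0..<Suc n]))
         @ concat (map (Slex n) (rev (filter even [0..<Suc n])))"

definition f :: "nat \<Rightarrow> bool list \<Rightarrow> nat" where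
  "f n x = (THE j. j \<in> {1..2^n} \<and> Seq n ! (j - 1) = x)"

definition compl :: "bool list \<Rightarrow> bool list" where
  "compl x = map Not x"

end

theory Submission imports Defs begin

text \<open>Complementation maps weight \<open>i\<close> to \<open>n - i\<close> and reverses the lexicographic order on
  strings of equal length, so it carries \<open>Rlex n i\<close> onto \<open>Slex n (n - i)\<close>. For odd \<open>n\<close>,
  as \<open>i\<close> runs upwards through the odd weights, \<open>n - i\<close> runs downwards through the even
  weights. Hence \<open>Seq n\<close> is a list \<open>A\<close> of the \<open>2 ^ (n - 1)\<close> odd-weight strings followed
  by the complements of \<open>A\<close> in the same order, so the complement of the string at position
  \<open>p\<close> sits at position \<open>p + 2 ^ (n - 1)\<close>.\<close>

definition strings_of_weight :: "nat \<Rightarrow> nat \<Rightarrow> bool list set" where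
  "strings_of_weight n i = {x. length x = n \<and> weight x = i}"

definition odd_part :: "nat \<Rightarrow> bool list list" where
  "odd_part n = concat (map (Rlex n) (filter odd [0..<Suc n]))"

definition even_part :: "nat \<Rightarrow> bool list list" where
  "even_part n = concat (map (Slex n) (rev (filter even [0..<Suc n])))"

lemma Seq_eq_odd_part_even_part: "Seq n = odd_part n @ even_part n"
  by (simp add: Seq_def odd_part_def even_part_def)

lemma weight_le_length: "weight x \<le> length x"
  by (simp add: weight_def count_le_length)

lemma weight_compl: "weight (compl x) = length x - weight x"
  by (induction x) (auto simp: weight_def compl_def Suc_diff_le count_le_length)

lemma length_compl [simp]: "length (compl x) = length x"
  by (simp add: compl_def)

lemma compl_compl [simp]: "compl (compl x) = x"
  by (simp add: compl_def comp_def)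

lemma inj_compl: "inj compl"
  by (metis compl_compl injI)

lemma compl_less_compl_iff:
  "length x = length y \<Longrightarrow> compl x < compl y \<longleftrightarrow> y < x"
  by (induction x y rule: list_induct2) (auto simp: compl_def)

lemma finite_strings_of_weight: "finite (strings_of_weight n i)"
  by (rule finite_subset[OF _ finite_lists_length_eq[of "UNIV :: bool set" n]])
     (auto simp: strings_of_weight_def)

lemma compl_image_strings_of_weight:
  assumes "i \<le> n"
  shows "compl ` strings_of_weight n i = strings_of_weight n (n - i)"
proof (intro equalityI subsetI)
  fix x assume "x \<in> strings_of_weight n (n - i)"
  then have "compl x \<in> strings_of_weight n i" "x = compl (compl x)"
    using assms by (auto simp: strings_of_weight_def weight_compl)
  then show "x \<in> compl ` strings_of_weight n i" by blast
qed (auto simp: strings_of_weight_def weight_compl)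

lemma set_Slex: "set (Slex n i) = strings_of_weight n i"
  using finite_strings_of_weight by (simp add: Slex_def strings_of_weight_def)

lemma set_Rlex: "set (Rlex n i) = strings_of_weight n i"
  by (simp add: Rlex_def set_Slex)

lemma distinct_Slex: "distinct (Slex n i)"
  by (simp add: Slex_def)

lemma distinct_Rlex: "distinct (Rlex n i)"
  by (simp add: Rlex_def distinct_Slex)

lemma sorted_Slex: "sorted_wrt (<) (Slex n i)"
  by (simp add: Slex_def)

lemma map_compl_Rlex:
  assumes "i \<le> n"
  shows "map compl (Rlex n i) = Slex n (n - i)"
proof (rule strict_sorted_equal)
  show "sorted_wrt (<) (Slex n (n - i))"
    by (rule sorted_Slex)
  show "sorted_wrt (<) (map compl (Rlex n i))"
    unfolding Rlex_def sorted_wrt_map sorted_wrt_rev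
    by (rule sorted_wrt_mono_rel[OF _ sorted_Slex])
       (auto simp: set_Slex strings_of_weight_def compl_less_compl_iff)
  show "set (map compl (Rlex n i)) = set (Slex n (n - i))"
    using compl_image_strings_of_weight[OF assms] by (simp add: set_Rlex set_Slex)
qed

lemma distinct_concat_strings_of_weight:
  assumes "distinct ws" "\<And>i. distinct (g i)" "\<And>i. set (g i) = strings_of_weight n i"
  shows "distinct (concat (map g ws))"
  using assms by (induction ws) (auto simp: strings_of_weight_def)

lemma set_odd_part: "set (odd_part n) = {x. length x = n \<and> odd (weight x)}"
  using weight_le_length
  by (auto simp: odd_part_def set_Rlex strings_of_weight_def less_Suc_eq_le simp del: upt_Suc)

lemma set_even_part: "set (even_part n) = {x. length x = n \<and> even (weight x)}"
  using weight_le_length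
  by (auto simp: even_part_def set_Slex strings_of_weight_def less_Suc_eq_le simp del: upt_Suc)

lemma distinct_odd_part: "distinct (odd_part n)"
  unfolding odd_part_def
  by (rule distinct_concat_strings_of_weight) (simp_all add: distinct_Rlex set_Rlex)

lemma distinct_even_part: "distinct (even_part n)"
  unfolding even_part_def
  by (rule distinct_concat_strings_of_weight) (simp_all add: distinct_Slex set_Slex)

lemma rev_filter_even_upt:
  assumes "odd n"
  shows "rev (filter even [0..<Suc n]) = map (\<lambda>i. n - i) (filter odd [0..<Suc n])"
proof -
  have "rev [0..<Suc n] = map (\<lambda>i. n - i) [0..<Suc n]"
    by (rule nth_equalityI) (auto simp: rev_nth simp del: upt_Suc)
  then have "rev (filter even [0..<Suc n]) = filter even (map (\<lambda>i. n - i) [0..<Suc n])"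
    by (simp only: rev_filter)
  also have "\<dots> = map (\<lambda>i. n - i) (filter (\<lambda>i. even (n - i)) [0..<Suc n])"
    by (simp add: filter_map comp_def)
  also have "filter (\<lambda>i. even (n - i)) [0..<Suc n] = filter odd [0..<Suc n]"
    by (rule filter_cong) (use assms in auto)
  finally show ?thesis .
qed

lemma even_part_eq_map_compl_odd_part:
  assumes "odd n"
  shows "even_part n = map compl (odd_part n)"
proof -
  have "map compl (odd_part n) = concat (map (\<lambda>i. map compl (Rlex n i)) (filter odd [0..<Suc n]))"
    by (simp add: odd_part_def map_concat comp_def)
  also have "\<dots> = concat (map (\<lambda>i. Slex n (n - i)) (filter odd [0..<Suc n]))"
    by (intro arg_cong[where f = concat] map_cong) (auto simp: map_compl_Rlex simp del: upt_Suc)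
  also have "\<dots> = even_part n"
    by (simp add: even_part_def rev_filter_even_upt[OF assms] comp_def del: upt_Suc)
  finally show ?thesis by simp
qed

lemma set_Seq: "set (Seq n) = {x. length x = n}"
  by (auto simp: Seq_eq_odd_part_even_part set_odd_part set_even_part)

lemma distinct_Seq: "distinct (Seq n)"
  using distinct_odd_part distinct_even_part
  by (auto simp: Seq_eq_odd_part_even_part set_odd_part set_even_part)

lemma length_Seq: "length (Seq n) = 2 ^ n"
proof -
  have "length (Seq n) = card {x :: bool list. set x \<subseteq> UNIV \<and> length x = n}"
    using distinct_card[OF distinct_Seq] by (simp add: set_Seq)
  then show ?thesis
    using card_lists_length_eq[of "UNIV :: bool set" n] by simp
qed

lemma f_Seq_nth:
  assumes "j < 2 ^ n"
  shows "f n (Seq n ! j) = j + 1"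
  unfolding f_def
proof (rule the_equality)
  fix k assume k: "k \<in> {1..2 ^ n} \<and> Seq n ! (k - 1) = Seq n ! j"
  then have "1 \<le> k" "k - 1 < 2 ^ n" by auto
  with k have "k - 1 = j"
    using nth_eq_iff_index_eq[OF distinct_Seq[of n], of "k - 1" j] assms by (simp add: length_Seq)
  with \<open>1 \<le> k\<close> show "k = j + 1" by linarith
qed (use assms in simp)

theorem mainTheorem1:
  fixes n :: nat and x :: "bool list"
  assumes "n \<ge> 3" and "odd n" and "length x = n" and "odd (weight x)"
  shows "f n (compl x) = f n x + 2 ^ (n - 1)"
proof -
  define A where "A = odd_part n"
  have Seq: "Seq n = A @ map compl A"
    using even_part_eq_map_compl_odd_part[OF assms(2)]
    by (simp add: A_def Seq_eq_odd_part_even_part)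
  have "2 * length A = 2 ^ n"
    using length_Seq[of n] by (simp add: Seq)
  also have "\<dots> = 2 * 2 ^ (n - 1)"
    using assms(1) power_Suc[of 2 "n - 1"] by simp
  finally have length_A: "length A = 2 ^ (n - 1)" by simp
  have "x \<in> set A"
    using assms(3,4) by (simp add: A_def set_odd_part)
  then obtain p where p: "p < length A" "A ! p = x"
    by (metis in_set_conv_nth)
  have "Seq n ! p = x" "Seq n ! (length A + p) = compl x"
    using p by (simp_all add: Seq nth_append)
  moreover have "p < 2 ^ n" "length A + p < 2 ^ n"
    using p \<open>2 * length A = 2 ^ n\<close> by linarith+
  ultimately have "f n x = p + 1" "f n (compl x) = length A + p + 1"
    using f_Seq_nth[of p n] f_Seq_nth[of "length A + p" n] by simp_all
  then show ?thesis
    using length_A by simp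
qed

end
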